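(* There is a homotopy equivalence $$SU(2)\times SU(2)\setminus Hom(\mathbb Z\oplus\mathbb Z,SU(2))\ \simeq\ SO(3).$$
   Context: $Hom(\mathbb Z\oplus\mathbb Z,SU(2))$ is identified with the subspace of $SU(2)\times SU(2)$ consisting of ordered pairs of commuting elements; the left side is its complement in $SU(2)\times SU(2)$. *)

theory Defs
  imports "HOL-Analysis.Analysis"
begin

definition conj_transpose :: "complex^2^2 \<Rightarrow> complex^2^2" where
  "conj_transpose A = (\<chi> i j. cnj (A $ j $ i))"

definition SU2 :: "(complex^2^2) set" where
  "SU2 = {A. A ** conj_transpose A = mat 1 \<and> det A = 1}"

definition SO3 :: "(real^3^3) set" where
  "SO3 = {A. orthogonal_matrix A \<and> det A = 1}"

definition Hom_Z2_SU2 :: "((complex^2^2) \<times> (complex^2^2)) set" where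
  "Hom_Z2_SU2 = {(A, B). A \<in> SU2 \<and> B \<in> SU2 \<and> A ** B = B ** A}"

end

theory Submission
  imports Defs
begin

(* Write SU(2) as the unit quaternions r + u with r real and u in R^3. Two of them commute
   iff their imaginary parts are parallel, so the space in question consists of the pairs
   (r + u, s + w) with u x w nonzero. Shrinking the real parts to 0 and removing from w its
   component along u, renormalising at every time, changes u x w only by a positive factor;
   the deformation ends at the pairs of orthonormal pure quaternions (u, w), which correspond
   to SO(3) via the rotation with rows u, w, u x w. *)

definition quat_mat :: "real \<Rightarrow> real^3 \<Rightarrow> complex^2^2" where
  "quat_mat r u = (\<chi> i j.
     if i = 1 then (if j = 1 then Complex r (u$1) else Complex (u$2) (u$3))
     else (if j = 1 then Complex (- u$2) (u$3) else Complex r (- u$1)))"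

definition quat_re :: "complex^2^2 \<Rightarrow> real" where
  "quat_re A = Re (A$1$1)"

definition quat_im :: "complex^2^2 \<Rightarrow> real^3" where
  "quat_im A = vector [Im (A$1$1), Re (A$1$2), Im (A$1$2)]"

lemma quat_mat_nth [simp]:
  "quat_mat r u $ 1 $ 1 = Complex r (u$1)" "quat_mat r u $ 1 $ 2 = Complex (u$2) (u$3)"
  "quat_mat r u $ 2 $ 1 = Complex (- u$2) (u$3)" "quat_mat r u $ 2 $ 2 = Complex r (- u$1)"
  by (simp_all add: quat_mat_def)

lemma quat_re_quat_mat [simp]: "quat_re (quat_mat r u) = r"
  by (simp add: quat_re_def)

lemma quat_im_quat_mat [simp]: "quat_im (quat_mat r u) = u"
  by (simp add: quat_im_def vec_eq_iff forall_3)

lemma quat_mat_in_SU2_iff: "quat_mat r u \<in> SU2 \<longleftrightarrow> r\<^sup>2 + u \<bullet> u = 1"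
  by (auto simp: SU2_def vec_eq_iff forall_2 matrix_matrix_mult_def sum_2 conj_transpose_def
      det_2 mat_def complex_eq_iff inner_vec_def sum_3 power2_eq_square algebra_simps)

lemma SU2_eq_quat_mat:
  assumes "A \<in> SU2"
  shows "quat_mat (quat_re A) (quat_im A) = A"
proof -
  let ?a = "A$1$1" and ?b = "A$1$2" and ?c = "A$2$1" and ?d = "A$2$2"
  have unitary: "?a * cnj ?a + ?b * cnj ?b = 1" "?c * cnj ?a + ?d * cnj ?b = 0"
    and det: "?a * ?d - ?b * ?c = 1"
    using assms
    by (auto simp: SU2_def vec_eq_iff forall_2 matrix_matrix_mult_def sum_2 conj_transpose_def
        det_2 mat_def)
  \<comment> \<open>The conjugate transpose of A is its inverse, hence its adjugate.\<close>
  have "?d = ?d * (?a * cnj ?a + ?b * cnj ?b)"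
    using unitary(1) by simp
  also have "\<dots> = cnj ?a * (?a * ?d - ?b * ?c) + ?b * (?c * cnj ?a + ?d * cnj ?b)"
    by (simp add: algebra_simps)
  finally have d: "?d = cnj ?a"
    by (simp add: unitary(2) det)
  have "?c = ?c * (?a * cnj ?a + ?b * cnj ?b)"
    using unitary(1) by simp
  also have "\<dots> = - cnj ?b * (?a * ?d - ?b * ?c) + ?a * (?c * cnj ?a + ?d * cnj ?b)"
    by (simp add: algebra_simps)
  finally have c: "?c = - cnj ?b"
    by (simp add: unitary(2) det)
  from c d show ?thesis
    by (auto simp: vec_eq_iff forall_2 quat_re_def quat_im_def complex_eq_iff)
qed

lemma quat_mat_commute_iff:
  "quat_mat r u ** quat_mat s w = quat_mat s w ** quat_mat r u \<longleftrightarrow> cross3 u w = 0"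
  by (auto simp: vec_eq_iff forall_2 forall_3 matrix_matrix_mult_def sum_2 complex_eq_iff
      cross3_def algebra_simps)

lemma Hom_Z2_SU2_iff:
  "(A, B) \<in> Hom_Z2_SU2 \<longleftrightarrow> A \<in> SU2 \<and> B \<in> SU2 \<and> cross3 (quat_im A) (quat_im B) = 0"
  using quat_mat_commute_iff[of "quat_re A" "quat_im A" "quat_re B" "quat_im B"]
  by (auto simp: Hom_Z2_SU2_def SU2_eq_quat_mat)

definition quat_unit :: "real \<Rightarrow> real^3 \<Rightarrow> complex^2^2" where
  "quat_unit r u = quat_mat (r / sqrt (r\<^sup>2 + u \<bullet> u)) (u /\<^sub>R sqrt (r\<^sup>2 + u \<bullet> u))"

lemma quat_im_quat_unit: "quat_im (quat_unit r u) = u /\<^sub>R sqrt (r\<^sup>2 + u \<bullet> u)"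
  by (simp add: quat_unit_def)

lemma square_add_inner_self_pos:
  fixes u :: "'a::real_inner"
  shows "u \<noteq> 0 \<Longrightarrow> 0 < r\<^sup>2 + u \<bullet> u"
  by (simp add: add_nonneg_pos)

lemma quat_unit_in_SU2:
  assumes "u \<noteq> 0"
  shows "quat_unit r u \<in> SU2"
proof -
  define s where "s = sqrt (r\<^sup>2 + u \<bullet> u)"
  have s: "s\<^sup>2 = r\<^sup>2 + u \<bullet> u" "s \<noteq> 0"
    using square_add_inner_self_pos[OF assms, of r] by (simp_all add: s_def)
  have "(r / s)\<^sup>2 + (u /\<^sub>R s) \<bullet> (u /\<^sub>R s) = (r\<^sup>2 + u \<bullet> u) / s\<^sup>2"
    by (simp add: power2_eq_square divide_inverse algebra_simps)
  also have "\<dots> = 1"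
    using s by (simp flip: s(1))
  finally show ?thesis
    by (simp add: quat_unit_def quat_mat_in_SU2_iff s_def)
qed

lemma quat_unit_quat_mat:
  "r\<^sup>2 + u \<bullet> u = 1 \<Longrightarrow> quat_unit r u = quat_mat r u"
  by (simp add: quat_unit_def)

lemma quat_unit_quat_re_quat_im:
  "A \<in> SU2 \<Longrightarrow> quat_unit (quat_re A) (quat_im A) = A"
  by (metis SU2_eq_quat_mat quat_mat_in_SU2_iff quat_unit_quat_mat)

lemma quat_unit_zero: "quat_unit 0 u = quat_mat 0 (sgn u)"
  by (simp add: quat_unit_def sgn_div_norm norm_eq_sqrt_inner)

lemma noncommuting_quat_unit:
  assumes "cross3 u w \<noteq> 0"
  shows "(quat_unit r u, quat_unit s w) \<in> SU2 \<times> SU2 - Hom_Z2_SU2"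
proof -
  have "u \<noteq> 0" "w \<noteq> 0"
    using assms by auto
  moreover have "cross3 (quat_im (quat_unit r u)) (quat_im (quat_unit s w)) \<noteq> 0"
    using assms \<open>u \<noteq> 0\<close> \<open>w \<noteq> 0\<close>
    by (simp add: quat_im_quat_unit cross_mult_left cross_mult_right
        square_add_inner_self_pos less_imp_neq[symmetric])
  ultimately show ?thesis
    by (simp add: Hom_Z2_SU2_iff quat_unit_in_SU2)
qed

definition proj_onto :: "real^3 \<Rightarrow> real^3 \<Rightarrow> real^3" where
  "proj_onto v w = ((w \<bullet> v) / (v \<bullet> v)) *\<^sub>R v"

lemma cross_diff_proj_onto [simp]: "cross3 v (w - t *\<^sub>R proj_onto v w) = cross3 v w"
  by (simp add: proj_onto_def cross3_simps)

lemma orthogonal_diff_proj_onto: "v \<noteq> 0 \<Longrightarrow> orthogonal v (w - proj_onto v w)"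
  by (simp add: orthogonal_def proj_onto_def inner_diff_right inner_commute)

lemma proj_onto_orthogonal: "orthogonal v w \<Longrightarrow> proj_onto v w = 0"
  by (simp add: orthogonal_def proj_onto_def inner_commute)

definition gram_schmidt_frame :: "real^3 \<Rightarrow> real^3 \<Rightarrow> real^3^3" where
  "gram_schmidt_frame v w =
     (let e\<^sub>1 = sgn v; e\<^sub>2 = sgn (w - proj_onto v w) in vector [e\<^sub>1, e\<^sub>2, cross3 e\<^sub>1 e\<^sub>2])"

lemma det_rows_3: "det (vector [x, y, z] :: real^3^3) = cross3 x y \<bullet> z"
  by (simp add: cross3_simps)

lemma vector_rows_3: "vector [R$1, R$2, R$3] = (R :: 'a::zero^3^3)"
  by (simp add: vec_eq_iff forall_3)

lemma norm_cross_orthonormal: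
  "norm x = 1 \<Longrightarrow> norm y = 1 \<Longrightarrow> orthogonal x y \<Longrightarrow> norm (cross3 x y) = 1"
  using norm_cross_dot[of x y] norm_ge_zero[of "cross3 x y"]
  by (auto simp: orthogonal_def power2_eq_1_iff)

lemma SO3_iff_rows:
  "R \<in> SO3 \<longleftrightarrow>
     norm (R$1) = 1 \<and> norm (R$2) = 1 \<and> orthogonal (R$1) (R$2) \<and> R$3 = cross3 (R$1) (R$2)"
    (is "_ \<longleftrightarrow> ?rows")
proof
  assume R: "R \<in> SO3"
  have unit: "norm (R$i) = 1" and orth: "i \<noteq> j \<Longrightarrow> orthogonal (R$i) (R$j)" for i j
    using R by (auto simp: SO3_def orthogonal_matrix_orthonormal_rows row_def)
  let ?c = "cross3 (R$1) (R$2)"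
  have "?c \<bullet> R$3 = 1"
    using R det_rows_3[of "R$1" "R$2" "R$3"] by (simp add: SO3_def vector_rows_3)
  moreover have "norm ?c = 1"
    using unit orth by (simp add: norm_cross_orthonormal)
  ultimately have "(R$3 - ?c) \<bullet> (R$3 - ?c) = 0"
    using unit[of 3] by (simp add: inner_diff_left inner_diff_right inner_commute norm_eq_1)
  then show ?rows
    using unit orth by simp
next
  assume ?rows
  then have unit: "norm (R$1) = 1" "norm (R$2) = 1" "norm (cross3 (R$1) (R$2)) = 1"
    and orth: "orthogonal (R$1) (R$2)" and R3: "R$3 = cross3 (R$1) (R$2)"
    using norm_cross_orthonormal by auto
  have "orthogonal_matrix R"
    unfolding orthogonal_matrix_orthonormal_rows row_def vec_lambda_eta
    using orth by (auto simp: forall_3 unit R3 orthogonal_def inner_commute dot_cross_self)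
  moreover have "det R = 1"
    using det_rows_3[of "R$1" "R$2" "R$3"] unit(3)
    by (simp only: vector_rows_3) (simp add: R3 norm_eq_1)
  ultimately show "R \<in> SO3"
    by (simp add: SO3_def)
qed

lemma gram_schmidt_frame_in_SO3:
  assumes "cross3 v w \<noteq> 0"
  shows "gram_schmidt_frame v w \<in> SO3"
proof -
  have "v \<noteq> 0" "w - proj_onto v w \<noteq> 0"
    using assms cross_diff_proj_onto[of v w 1]
    by (metis cross_zero_left, metis cross_zero_right scale_one)
  moreover from this have "orthogonal (sgn v) (sgn (w - proj_onto v w))"
    using orthogonal_diff_proj_onto by (simp add: sgn_div_norm orthogonal_clauses)
  ultimately show ?thesis
    by (simp add: gram_schmidt_frame_def Let_def SO3_iff_rows norm_sgn)
qed

lemma gram_schmidt_frame_orthonormal: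
  assumes "norm v = 1" "norm w = 1" "orthogonal v w"
  shows "gram_schmidt_frame v w = vector [v, w, cross3 v w]"
  using assms by (simp add: gram_schmidt_frame_def Let_def proj_onto_orthogonal sgn_div_norm)

lemma continuous_on_quat_re [continuous_intros]:
  "continuous_on S f \<Longrightarrow> continuous_on S (\<lambda>x. quat_re (f x))"
  unfolding quat_re_def by (intro continuous_intros)

lemma continuous_on_vector_3 [continuous_intros]:
  fixes a b c :: "'a::topological_space \<Rightarrow> 'b::real_normed_vector"
  assumes "continuous_on S a" "continuous_on S b" "continuous_on S c"
  shows "continuous_on S (\<lambda>x. vector [a x, b x, c x] :: 'b^3)"
proof -
  have "continuous_on S (\<lambda>x. vector [a x, b x, c x] $ i)" for i :: 3
    using exhaust_3[of i] assms by auto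
  from continuous_on_vec_lambda[of S "\<lambda>i x. vector [a x, b x, c x] $ i", OF this]
  show ?thesis
    by simp
qed

lemma continuous_on_quat_im [continuous_intros]:
  "continuous_on S f \<Longrightarrow> continuous_on S (\<lambda>x. quat_im (f x))"
  unfolding quat_im_def by (intro continuous_intros)

lemma continuous_on_quat_mat [continuous_intros]:
  assumes "continuous_on S r" "continuous_on S u"
  shows "continuous_on S (\<lambda>x. quat_mat (r x) (u x))"
  unfolding quat_mat_def Complex_eq
proof (intro continuous_on_vec_lambda)
  fix i j :: 2
  show "continuous_on S (\<lambda>x.
     if i = 1 then (if j = 1 then of_real (r x) + \<i> * of_real (u x $ 1)
                   else of_real (u x $ 2) + \<i> * of_real (u x $ 3))
     else (if j = 1 then of_real (- u x $ 2) + \<i> * of_real (u x $ 3)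
           else of_real (r x) + \<i> * of_real (- u x $ 1)))"
    using exhaust_2[of i] exhaust_2[of j] by (auto intro!: continuous_intros assms)
qed

lemma continuous_on_quat_unit [continuous_intros]:
  assumes "continuous_on S r" "continuous_on S u" "\<And>x. x \<in> S \<Longrightarrow> u x \<noteq> 0"
  shows "continuous_on S (\<lambda>x. quat_unit (r x) (u x))"
proof -
  have "sqrt ((r x)\<^sup>2 + u x \<bullet> u x) \<noteq> 0" if "x \<in> S" for x
    using square_add_inner_self_pos[OF assms(3)[OF that], of "r x"] by simp
  then show ?thesis
    unfolding quat_unit_def by (intro continuous_intros assms) auto
qed

lemma continuous_on_proj_onto [continuous_intros]:
  assumes "continuous_on S v" "continuous_on S w" "\<And>x. x \<in> S \<Longrightarrow> v x \<noteq> 0"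
  shows "continuous_on S (\<lambda>x. proj_onto (v x) (w x))"
  unfolding proj_onto_def using assms by (intro continuous_intros) auto

lemma continuous_on_gram_schmidt_frame [continuous_intros]:
  fixes S :: "'a::t2_space set"
  assumes "continuous_on S v" "continuous_on S w" "\<And>x. x \<in> S \<Longrightarrow> cross3 (v x) (w x) \<noteq> 0"
  shows "continuous_on S (\<lambda>x. gram_schmidt_frame (v x) (w x))"
proof -
  have "v x \<noteq> 0" "w x - proj_onto (v x) (w x) \<noteq> 0" if "x \<in> S" for x
    using assms(3)[OF that] cross_diff_proj_onto[of "v x" "w x" 1] by auto
  then show ?thesis
    unfolding gram_schmidt_frame_def Let_def using assms
    by (intro continuous_intros continuous_on_cross) auto
qed

definition frame_of_pair :: "(complex^2^2) \<times> (complex^2^2) \<Rightarrow> real^3^3" where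
  "frame_of_pair p = gram_schmidt_frame (quat_im (fst p)) (quat_im (snd p))"

definition pair_of_frame :: "real^3^3 \<Rightarrow> (complex^2^2) \<times> (complex^2^2)" where
  "pair_of_frame R = (quat_mat 0 (R$1), quat_mat 0 (R$2))"

lemma frame_of_pair_in_SO3:
  "p \<in> SU2 \<times> SU2 - Hom_Z2_SU2 \<Longrightarrow> frame_of_pair p \<in> SO3"
  by (cases p) (simp add: Hom_Z2_SU2_iff frame_of_pair_def gram_schmidt_frame_in_SO3)

lemma pair_of_frame_noncommuting:
  assumes "R \<in> SO3"
  shows "pair_of_frame R \<in> SU2 \<times> SU2 - Hom_Z2_SU2"
proof -
  have "norm (R$1) = 1" "norm (R$2) = 1" "cross3 (R$1) (R$2) = R$3" "norm (R$3) = 1"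
    using assms by (auto simp: SO3_iff_rows norm_cross_orthonormal)
  then show ?thesis
    by (auto simp: pair_of_frame_def Hom_Z2_SU2_iff quat_mat_in_SU2_iff norm_eq_1)
qed

lemma frame_of_pair_of_frame:
  assumes "R \<in> SO3"
  shows "frame_of_pair (pair_of_frame R) = R"
proof -
  have "frame_of_pair (pair_of_frame R) = vector [R$1, R$2, R$3]"
    using assms by (simp add: SO3_iff_rows frame_of_pair_def pair_of_frame_def
        gram_schmidt_frame_orthonormal)
  then show ?thesis
    by (simp only: vector_rows_3)
qed

lemma retraction_maps_frame_of_pair:
  "retraction_maps (top_of_set (SU2 \<times> SU2 - Hom_Z2_SU2)) (top_of_set SO3)
     frame_of_pair pair_of_frame"
proof -
  have "continuous_on (SU2 \<times> SU2 - Hom_Z2_SU2) frame_of_pair"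
    unfolding frame_of_pair_def
    by (intro continuous_intros) (auto simp: Hom_Z2_SU2_iff)
  moreover have "continuous_on SO3 pair_of_frame"
    unfolding pair_of_frame_def by (intro continuous_intros)
  ultimately show ?thesis
    using frame_of_pair_in_SO3 pair_of_frame_noncommuting frame_of_pair_of_frame
    by (auto simp: retraction_maps_def simp del: Diff_iff)
qed

definition straighten ::
    "real \<Rightarrow> (complex^2^2) \<times> (complex^2^2) \<Rightarrow> (complex^2^2) \<times> (complex^2^2)" where
  "straighten t p =
     (let u = quat_im (fst p); w = quat_im (snd p) in
       (quat_unit ((1 - t) * quat_re (fst p)) u,
        quat_unit ((1 - t) * quat_re (snd p)) (w - t *\<^sub>R proj_onto u w)))"

lemma straighten_noncommuting:
  assumes "p \<in> SU2 \<times> SU2 - Hom_Z2_SU2"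
  shows "straighten t p \<in> SU2 \<times> SU2 - Hom_Z2_SU2"
proof (cases p)
  case (Pair A B)
  with assms have "cross3 (quat_im A) (quat_im B) \<noteq> 0"
    by (simp add: Hom_Z2_SU2_iff)
  then show ?thesis
    unfolding Pair straighten_def Let_def by (intro noncommuting_quat_unit) simp
qed

lemma straighten_0: "p \<in> SU2 \<times> SU2 \<Longrightarrow> straighten 0 p = p"
  by (auto simp: straighten_def quat_unit_quat_re_quat_im)

lemma straighten_1: "straighten 1 p = pair_of_frame (frame_of_pair p)"
  by (simp add: straighten_def frame_of_pair_def pair_of_frame_def gram_schmidt_frame_def
      quat_unit_zero Let_def)

lemma continuous_on_straighten:
  "continuous_on (T \<times> (SU2 \<times> SU2 - Hom_Z2_SU2)) (\<lambda>z. straighten (fst z) (snd z))"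
proof -
  have "quat_im (fst p) \<noteq> 0 \<and>
      quat_im (snd p) - t *\<^sub>R proj_onto (quat_im (fst p)) (quat_im (snd p)) \<noteq> 0"
    if "p \<in> SU2 \<times> SU2 - Hom_Z2_SU2" for t p
  proof -
    have "cross3 (quat_im (fst p))
        (quat_im (snd p) - t *\<^sub>R proj_onto (quat_im (fst p)) (quat_im (snd p))) \<noteq> 0"
      using that by (cases p) (simp add: Hom_Z2_SU2_iff)
    then show ?thesis
      by (metis cross_zero_left cross_zero_right)
  qed
  then show ?thesis
    unfolding straighten_def Let_def by (intro continuous_intros) auto
qed

lemma homotopic_pair_of_frame_id:
  "homotopic_with (\<lambda>x. True) (top_of_set (SU2 \<times> SU2 - Hom_Z2_SU2))
     (top_of_set (SU2 \<times> SU2 - Hom_Z2_SU2)) (pair_of_frame \<circ> frame_of_pair) id"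
proof (rule homotopic_with_symD)
  show "homotopic_with (\<lambda>x. True) (top_of_set (SU2 \<times> SU2 - Hom_Z2_SU2))
     (top_of_set (SU2 \<times> SU2 - Hom_Z2_SU2)) id (pair_of_frame \<circ> frame_of_pair)"
    using continuous_on_straighten straighten_noncommuting straighten_0 straighten_1
    by (simp add: homotopic_with) (rule exI[of _ "\<lambda>z. straighten (fst z) (snd z)"], auto)
qed

theorem mainTheorem13:
  shows "((SU2 \<times> SU2) - Hom_Z2_SU2) homotopy_eqv SO3"
  using homotopic_pair_of_frame_id retraction_maps_frame_of_pair
  by (rule deformation_retraction_imp_homotopy_equivalent_space)

end
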